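(* Let $N\ge1$ be an integer. The normalizer of $\Gamma_0(N)$, viewed as a group of linear fractional transformations, acts transitively on $\mathbb Q$ if and only if $N=2^a3^bN'$ for some integers $0\le a<8$, $0\le b<4$ and a square-free integer $N'$ divisible neither by $2$ nor by $3$.
   Context: $\Gamma_0(N)$ is the subgroup of $\mathrm{SL}_2(\mathbb Z)$ of matrices whose bottom-left entry is divisible by $N$. Its normalizer is taken in the group of orientation-preserving linear fractional transformations $z\mapsto(az+b)/(cz+d)$ with $\begin{pmatrix}a&b\\c&d\end{pmatrix}\in\mathrm{GL}_2^+(\mathbb R)$, which act on $\mathbb R\cup\{\infty\}$. *)

theory Defs
  imports Complex_Main "HOL-Computational_Algebra.Squarefree"
begin

text \<open>2x2 real matrices (a,b,c,d) standing for [[a,b],[c,d]].\<close>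
type_synonym mat2 = "real \<times> real \<times> real \<times> real"

fun mmul2 :: "mat2 \<Rightarrow> mat2 \<Rightarrow> mat2" where
  "mmul2 (a,b,c,d) (e,f,g,h) = (a*e + b*g, a*f + b*h, c*e + d*g, c*f + d*h)"

fun det2 :: "mat2 \<Rightarrow> real" where
  "det2 (a,b,c,d) = a*d - b*c"

fun minv2 :: "mat2 \<Rightarrow> mat2" where
  "minv2 (a,b,c,d) = (d / (a*d-b*c), -b / (a*d-b*c), -c / (a*d-b*c), a / (a*d-b*c))"

definition Gamma0 :: "nat \<Rightarrow> mat2 set" where
  "Gamma0 N = {(of_int a, of_int b, of_int c, of_int d) | a b c d :: int.
                 a*d - b*c = 1 \<and> int N dvd c}"

text \<open>Conjugation by M as a linear fractional
  transformation equals conjugation of matrices; since conjugates have determinant 1 and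
  -1 is in Gamma_0(N), equality of the projective images is equality of matrix sets.\<close>
definition normalizer_Gamma0 :: "nat \<Rightarrow> mat2 set" where
  "normalizer_Gamma0 N = {M. det2 M > 0 \<and>
      (\<lambda>g. mmul2 (mmul2 M g) (minv2 M)) ` Gamma0 N = Gamma0 N}"

fun lft_defined :: "mat2 \<Rightarrow> real \<Rightarrow> bool" where
  "lft_defined (a,b,c,d) x = (c*x + d \<noteq> 0)"

fun lft :: "mat2 \<Rightarrow> real \<Rightarrow> real" where
  "lft (a,b,c,d) x = (a*x + b) / (c*x + d)"

end

(*
  Sufficiency: write N = h^2 K with K squarefree and h dividing 24, so that every unit modulo h
  is its own inverse.  Then the Atkin--Lehner type matrices [[h e a, b], [N c, h e d]] with
  N = h^2 e f and e a d - f b c = 1 normalize Gamma_0(N).  For every rational x one of them sends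
  x to infinity (here K squarefree is used), and the Fricke involution [[0, -1], [N, 0]] sends
  infinity to 0; so every rational lies in the orbit of 0.

  Necessity: if an element M of the normalizer sends 0 to 1/m with m^2 dividing N, then the
  off-diagonal entries of the conjugates by M of [[1,1],[0,1]], [[1,0],[N,1]] and an arbitrary
  [[x,y],[N z,w]] in Gamma_0(N) force m | x - w.  As x w = 1 mod N, this gives m | x^2 - 1, and
  x can be any residue prime to m.  For m = 16, 9 and any prime p >= 5 this fails (x = 3, 2, 2).
*)

theory Submission
  imports Defs
begin

section \<open>Matrices and linear fractional transformations\<close>

definition conj2 :: "mat2 \<Rightarrow> mat2 \<Rightarrow> mat2" where
  "conj2 M g = mmul2 (mmul2 M g) (minv2 M)"

fun adj2 :: "mat2 \<Rightarrow> mat2" where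
  "adj2 (a,b,c,d) = (d,-b,-c,a)"

fun smul2 :: "real \<Rightarrow> mat2 \<Rightarrow> mat2" where
  "smul2 s (a,b,c,d) = (s*a,s*b,s*c,s*d)"

fun upper_right2 :: "mat2 \<Rightarrow> real" where
  "upper_right2 (a,b,c,d) = b"

fun lower_left2 :: "mat2 \<Rightarrow> real" where
  "lower_left2 (a,b,c,d) = c"

lemma conj2_explicit:
  "conj2 (A,B,C,D) (x,y,z,w) =
    ((A*D*x + B*D*z - A*C*y - B*C*w)/(A*D-B*C), (-A*B*x - B*B*z + A*A*y + A*B*w)/(A*D-B*C),
     (C*D*x + D*D*z - C*C*y - C*D*w)/(A*D-B*C), (-B*C*x - B*D*z + A*C*y + A*D*w)/(A*D-B*C))"
  unfolding conj2_def by (simp add: field_simps add_divide_distrib diff_divide_distrib)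

lemma conj2_off_diagonal:
  "upper_right2 (conj2 (A,B,C,D) (x,y,z,w)) = ((w - x)*(A*B) + y*A^2 - z*B^2) / (A*D - B*C)"
  "lower_left2 (conj2 (A,B,C,D) (x,y,z,w)) = ((x - w)*(C*D) - y*C^2 + z*D^2) / (A*D - B*C)"
  unfolding conj2_explicit by (simp_all add: algebra_simps power2_eq_square)

lemma det2_mmul2: "det2 (mmul2 A B) = det2 A * det2 B"
  by (cases A; cases B) (simp add: algebra_simps)

lemma mmul2_assoc: "mmul2 (mmul2 A B) C = mmul2 A (mmul2 B C)"
  by (cases A; cases B; cases C) (simp add: algebra_simps)

lemma minv2_eq_smul2_adj2: "minv2 A = smul2 (1 / det2 A) (adj2 A)"
  by (cases A) simp

lemma mmul2_smul2_left: "mmul2 (smul2 s A) B = smul2 s (mmul2 A B)"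
  by (cases A; cases B) (simp add: algebra_simps)

lemma mmul2_smul2_right: "mmul2 A (smul2 s B) = smul2 s (mmul2 A B)"
  by (cases A; cases B) (simp add: algebra_simps)

lemma smul2_smul2: "smul2 s (smul2 t A) = smul2 (s*t) A"
  by (cases A) (simp add: algebra_simps)

lemma adj2_mmul2: "adj2 (mmul2 A B) = mmul2 (adj2 B) (adj2 A)"
  by (cases A; cases B) (simp add: algebra_simps)

lemma adj2_smul2: "adj2 (smul2 s A) = smul2 s (adj2 A)"
  by (cases A) simp

lemma mmul2_adj2_right: "mmul2 A (adj2 A) = smul2 (det2 A) (1,0,0,1)"
  by (cases A) (simp add: algebra_simps)

lemma mmul2_adj2_left: "mmul2 (adj2 A) A = smul2 (det2 A) (1,0,0,1)"
  by (cases A) (simp add: algebra_simps)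

lemma det2_adj2: "det2 (adj2 A) = det2 A"
  by (cases A) (simp add: algebra_simps)

lemma det2_smul2: "det2 (smul2 s A) = s^2 * det2 A"
  by (cases A) (simp add: algebra_simps power2_eq_square)

lemma det2_minv2: "det2 (minv2 A) = 1 / det2 A"
  unfolding minv2_eq_smul2_adj2 det2_smul2 det2_adj2 by (simp add: power2_eq_square)

lemma minv2_mmul2:
  "det2 A \<noteq> 0 \<Longrightarrow> det2 B \<noteq> 0 \<Longrightarrow> minv2 (mmul2 A B) = mmul2 (minv2 B) (minv2 A)"
  unfolding minv2_eq_smul2_adj2 det2_mmul2 adj2_mmul2 mmul2_smul2_left mmul2_smul2_right smul2_smul2
  by (simp add: mult.commute)

lemma mmul2_minv2_right: "det2 A \<noteq> 0 \<Longrightarrow> mmul2 A (minv2 A) = (1,0,0,1)"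
  unfolding minv2_eq_smul2_adj2 mmul2_smul2_right mmul2_adj2_right smul2_smul2 by simp

lemma mmul2_minv2_left: "det2 A \<noteq> 0 \<Longrightarrow> mmul2 (minv2 A) A = (1,0,0,1)"
  unfolding minv2_eq_smul2_adj2 mmul2_smul2_left mmul2_adj2_left smul2_smul2 by simp

lemma conj2_id: "conj2 (1,0,0,1) g = g"
  by (cases g) (simp add: conj2_def)

lemma conj2_mmul2:
  "det2 A \<noteq> 0 \<Longrightarrow> det2 B \<noteq> 0 \<Longrightarrow> conj2 (mmul2 A B) g = conj2 A (conj2 B g)"
  unfolding conj2_def by (simp add: minv2_mmul2 mmul2_assoc)

lemma conj2_minv2_conj2: "det2 A \<noteq> 0 \<Longrightarrow> conj2 (minv2 A) (conj2 A g) = g"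
  by (simp add: conj2_mmul2[symmetric] det2_minv2 mmul2_minv2_left conj2_id)

lemma conj2_conj2_minv2: "det2 A \<noteq> 0 \<Longrightarrow> conj2 A (conj2 (minv2 A) g) = g"
  by (simp add: conj2_mmul2[symmetric] det2_minv2 mmul2_minv2_right conj2_id)

lemma conj2_smul2: "s \<noteq> 0 \<Longrightarrow> conj2 (smul2 s A) g = conj2 A g"
  unfolding conj2_def minv2_eq_smul2_adj2 adj2_smul2 det2_smul2 mmul2_smul2_left
    mmul2_smul2_right smul2_smul2 by (simp add: power2_eq_square)

lemma conj2_minv2_eq_conj2_adj2: "det2 A \<noteq> 0 \<Longrightarrow> conj2 (minv2 A) g = conj2 (adj2 A) g"
  unfolding minv2_eq_smul2_adj2 by (simp add: conj2_smul2)

lemma det2_conj2: "det2 A \<noteq> 0 \<Longrightarrow> det2 (conj2 A g) = det2 g"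
  unfolding conj2_def det2_mmul2 det2_minv2 by simp

lemma lft_mmul2:
  assumes "lft_defined B x" "lft_defined A (lft B x)"
  shows "lft_defined (mmul2 A B) x \<and> lft (mmul2 A B) x = lft A (lft B x)"
proof -
  obtain a b c d where A: "A = (a,b,c,d)" by (cases A)
  obtain e f g h where B: "B = (e,f,g,h)" by (cases B)
  have den: "g*x + h \<noteq> 0" using assms(1) B by simp
  have "c*((e*x+f)/(g*x+h)) + d = ((c*e+d*g)*x + (c*f+d*h))/(g*x+h)"
       "a*((e*x+f)/(g*x+h)) + b = ((a*e+b*g)*x + (a*f+b*h))/(g*x+h)"
    using den by (simp_all add: field_simps)
  then show ?thesis using assms(2) den unfolding A B by simp
qed

lemma lft_minv2:
  assumes "det2 A \<noteq> 0" "lft_defined A x"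
  shows "lft_defined (minv2 A) (lft A x) \<and> lft (minv2 A) (lft A x) = x"
proof -
  obtain a b c d where A: "A = (a,b,c,d)" by (cases A)
  define \<Delta> where "\<Delta> = a*d - b*c"
  have \<Delta>: "\<Delta> \<noteq> 0" and den: "c*x + d \<noteq> 0" using assms A \<Delta>_def by auto
  have frac: "u/\<Delta> * (P/Q) + v/\<Delta> = (u*P + v*Q) / (\<Delta>*Q)" if "Q \<noteq> 0" for u v P Q
    using \<Delta> that by (simp add: field_simps)
  have "-c*(a*x+b) + a*(c*x+d) = \<Delta>" "d*(a*x+b) + -b*(c*x+d) = \<Delta>*x"
    unfolding \<Delta>_def by (simp_all add: algebra_simps)
  then have "-c/\<Delta> * ((a*x+b)/(c*x+d)) + a/\<Delta> = 1/(c*x+d)"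
       "d/\<Delta> * ((a*x+b)/(c*x+d)) + -b/\<Delta> = x/(c*x+d)"
    unfolding frac[OF den] using \<Delta> by simp_all
  then show ?thesis using den unfolding A \<Delta>_def minv2.simps lft.simps lft_defined.simps by simp
qed

section \<open>The normalizer as a group\<close>

lemma normalizer_Gamma0_conj2:
  "normalizer_Gamma0 N = {M. det2 M > 0 \<and> conj2 M ` Gamma0 N = Gamma0 N}"
  unfolding normalizer_Gamma0_def conj2_def by simp

lemma normalizer_Gamma0I:
  assumes "det2 M > 0"
    and "\<And>g. g \<in> Gamma0 N \<Longrightarrow> conj2 M g \<in> Gamma0 N"
    and "\<And>g. g \<in> Gamma0 N \<Longrightarrow> conj2 (minv2 M) g \<in> Gamma0 N"
  shows "M \<in> normalizer_Gamma0 N"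
proof -
  have "Gamma0 N \<subseteq> conj2 M ` Gamma0 N"
  proof
    fix g assume "g \<in> Gamma0 N"
    then show "g \<in> conj2 M ` Gamma0 N"
      using assms conj2_conj2_minv2[of M g] by (metis image_eqI less_irrefl)
  qed
  with assms show ?thesis unfolding normalizer_Gamma0_conj2 by blast
qed

lemma mmul2_in_normalizer_Gamma0:
  assumes "A \<in> normalizer_Gamma0 N" "B \<in> normalizer_Gamma0 N"
  shows "mmul2 A B \<in> normalizer_Gamma0 N"
proof -
  have det: "det2 A > 0" "det2 B > 0"
    and inv: "conj2 A ` Gamma0 N = Gamma0 N" "conj2 B ` Gamma0 N = Gamma0 N"
    using assms unfolding normalizer_Gamma0_conj2 by auto
  have "conj2 (mmul2 A B) = conj2 A \<circ> conj2 B"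
    using det by (intro ext) (simp add: conj2_mmul2)
  then have "conj2 (mmul2 A B) ` Gamma0 N = Gamma0 N"
    by (metis inv image_comp)
  with det show ?thesis unfolding normalizer_Gamma0_conj2 by (simp add: det2_mmul2)
qed

lemma minv2_in_normalizer_Gamma0:
  assumes "A \<in> normalizer_Gamma0 N"
  shows "minv2 A \<in> normalizer_Gamma0 N"
proof -
  have det: "det2 A > 0" and inv: "conj2 A ` Gamma0 N = Gamma0 N"
    using assms unfolding normalizer_Gamma0_conj2 by auto
  have "conj2 (minv2 A) ` Gamma0 N = conj2 (minv2 A) ` conj2 A ` Gamma0 N"
    using inv by simp
  also have "\<dots> = Gamma0 N"
    using det by (simp add: image_comp o_def conj2_minv2_conj2)
  finally show ?thesis unfolding normalizer_Gamma0_conj2 using det by (simp add: det2_minv2)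
qed

section \<open>Atkin--Lehner matrices\<close>

lemma conj2_of_int:
  fixes A B C D x y z w x' y' z' w' \<Delta> :: int
  assumes "A*D - B*C = \<Delta>" "\<Delta> \<noteq> 0"
    "A*D*x + B*D*z - A*C*y - B*C*w = \<Delta>*x'"
    "-A*B*x - B*B*z + A*A*y + A*B*w = \<Delta>*y'"
    "C*D*x + D*D*z - C*C*y - C*D*w = \<Delta>*z'"
    "-B*C*x - B*D*z + A*C*y + A*D*w = \<Delta>*w'"
  shows "conj2 (of_int A, of_int B, of_int C, of_int D) (of_int x, of_int y, of_int z, of_int w)
         = (of_int x', of_int y', of_int z', of_int w')"
proof -
  have quotient: "(of_int n :: real) / of_int \<Delta> = of_int k" if "n = \<Delta>*k" for n k
    using that assms(2) by simp
  show ?thesis unfolding conj2_explicit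
    using quotient[OF assms(3)] quotient[OF assms(4)] quotient[OF assms(5)] quotient[OF assms(6)]
    unfolding assms(1)[symmetric] by simp
qed

text \<open>Among positive \<open>h\<close>, this holds exactly for the divisors of 24.\<close>
definition units_self_inverse_mod :: "int \<Rightarrow> bool" where
  "units_self_inverse_mod h \<longleftrightarrow> (\<forall>x w. h dvd x*w - 1 \<longrightarrow> h dvd x - w)"

lemma det2_of_int: "det2 (of_int a, of_int b, of_int c, of_int d) = of_int (a*d - b*c)"
  by simp

lemma Gamma0_of_intI:
  "a*d - b*c = 1 \<Longrightarrow> int N dvd c \<Longrightarrow> (of_int a, of_int b, of_int c, of_int d) \<in> Gamma0 N"
  unfolding Gamma0_def by blast

lemma Gamma0E:
  assumes "g \<in> Gamma0 N"
  obtains x y z w :: int where "g = (of_int x, of_int y, of_int (int N * z), of_int w)"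
    "x*w - y*(int N * z) = 1"
proof -
  obtain x y c w :: int where "g = (of_int x, of_int y, of_int c, of_int w)" "x*w - y*c = 1"
    and "int N dvd c"
    using assms unfolding Gamma0_def by blast
  moreover from \<open>int N dvd c\<close> obtain z where "c = int N * z" ..
  ultimately show thesis using that[of x y z w] by simp
qed

lemma atkin_lehner_conj2_Gamma0:
  fixes h e f \<alpha> \<beta> \<gamma> \<delta> :: int and N :: nat
  assumes N: "int N = h^2 * e * f" and "h > 0" "e > 0" and det: "e*\<alpha>*\<delta> - f*\<beta>*\<gamma> = 1"
    and units: "units_self_inverse_mod h" and g: "g \<in> Gamma0 N"
  shows "conj2 (of_int (h*e*\<alpha>), of_int \<beta>, of_int (int N*\<gamma>), of_int (h*e*\<delta>)) g \<in> Gamma0 N"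
    (is "conj2 ?W g \<in> _")
proof -
  obtain x y z w :: int where g_eq: "g = (of_int x, of_int y, of_int (int N * z), of_int w)"
    and det_g: "x*w - y*(int N * z) = 1"
    using g by (rule Gamma0E)
  \<comment> \<open>The diagonal entries of \<open>g\<close> agree modulo \<open>h\<close>; this is what makes the conjugate integral.\<close>
  have "x*w - 1 = y*(int N*z)" using det_g by simp
  moreover have "h dvd int N" using N by (simp add: power2_eq_square)
  ultimately have "h dvd x*w - 1" by simp
  with units have "h dvd x - w" unfolding units_self_inverse_mod_def by blast
  then obtain q where "x - w = h*q" ..
  then have q: "x = w + h*q" by simp
  define x' where "x' = e*\<alpha>*\<delta>*x + h*e*f*\<beta>*\<delta>*z - h*e*f*\<alpha>*\<gamma>*y - f*\<beta>*\<gamma>*w"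
  define y' where "y' = -\<alpha>*\<beta>*q - \<beta>*\<beta>*f*z + e*\<alpha>*\<alpha>*y"
  define z' where "z' = \<gamma>*\<delta>*q + e*\<delta>*\<delta>*z - f*\<gamma>*\<gamma>*y"
  define w' where "w' = -f*\<beta>*\<gamma>*x - h*e*f*\<beta>*\<delta>*z + h*e*f*\<alpha>*\<gamma>*y + e*\<alpha>*\<delta>*w"
  have "(h*e*\<alpha>)*(h*e*\<delta>) - \<beta>*(int N*\<gamma>) = h^2*e*(e*\<alpha>*\<delta> - f*\<beta>*\<gamma>)"
    by (simp add: N power2_eq_square algebra_simps)
  then have det_W: "(h*e*\<alpha>)*(h*e*\<delta>) - \<beta>*(int N*\<gamma>) = h^2*e"
    using det by simp
  have conj: "conj2 ?W g = (of_int x', of_int y', of_int (int N*z'), of_int w')"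
    unfolding g_eq
    by (rule conj2_of_int[OF det_W]) (use \<open>h > 0\<close> \<open>e > 0\<close> in
        \<open>simp_all add: x'_def y'_def z'_def w'_def N q power2_eq_square algebra_simps\<close>)
  have "det2 ?W = of_int (h^2*e)"
    by (simp only: det2_of_int det_W)
  then have "det2 (conj2 ?W g) = det2 g"
    using \<open>h > 0\<close> \<open>e > 0\<close> by (intro det2_conj2) simp
  then have "of_int (x'*w' - y'*(int N*z')) = (of_int (x*w - y*(int N*z)) :: real)"
    unfolding conj by (simp only: g_eq det2_of_int)
  then have "x'*w' - y'*(int N*z') = 1"
    unfolding of_int_eq_iff det_g .
  then show ?thesis unfolding conj by (intro Gamma0_of_intI) simp_all
qed

lemma atkin_lehner_in_normalizer_Gamma0:
  fixes h e f \<alpha> \<beta> \<gamma> \<delta> :: int and N :: nat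
  assumes N: "int N = h^2 * e * f" and h: "h > 0" and e: "e > 0"
    and det: "e*\<alpha>*\<delta> - f*\<beta>*\<gamma> = 1" and units: "units_self_inverse_mod h"
  shows "(of_int (h*e*\<alpha>), of_int \<beta>, of_int (int N*\<gamma>), of_int (h*e*\<delta>)) \<in> normalizer_Gamma0 N"
    (is "?W \<in> _")
proof (rule normalizer_Gamma0I)
  have "(h*e*\<alpha>)*(h*e*\<delta>) - \<beta>*(int N*\<gamma>) = h^2*e*(e*\<alpha>*\<delta> - f*\<beta>*\<gamma>)"
    by (simp add: N power2_eq_square algebra_simps)
  then have "det2 ?W = of_int (h^2*e)"
    using det by (simp only: det2_of_int)
  then show det_pos: "det2 ?W > 0"
    using h e by simp
  fix g assume g: "g \<in> Gamma0 N"
  show "conj2 ?W g \<in> Gamma0 N"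
    using atkin_lehner_conj2_Gamma0[OF N h e det units g] .
  \<comment> \<open>The adjugate of an Atkin--Lehner matrix is again one, with \<open>\<beta>, \<gamma>\<close> negated.\<close>
  have "e*\<delta>*\<alpha> - f*(-\<beta>)*(-\<gamma>) = 1"
    using det by (simp add: algebra_simps)
  note adj_in_Gamma0 = atkin_lehner_conj2_Gamma0[OF N h e this units g]
  have "adj2 ?W = (of_int (h*e*\<delta>), of_int (-\<beta>), of_int (int N*(-\<gamma>)), of_int (h*e*\<alpha>))"
    by simp
  with adj_in_Gamma0 have "conj2 (adj2 ?W) g \<in> Gamma0 N"
    by (simp only:)
  then show "conj2 (minv2 ?W) g \<in> Gamma0 N"
    using det_pos conj2_minv2_eq_conj2_adj2[of ?W g] by simp
qed

section \<open>Transitivity when \<open>N = h\<^sup>2 K\<close>\<close>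

lemma coprime_bezout_int:
  fixes a b :: int
  assumes "coprime a b"
  obtains u v where "u*a + v*b = 1"
  using bezout_int[of a b] assms by (auto simp: coprime_iff_gcd_eq_1)

lemma squarefree_coprime_div_gcd:
  fixes K v :: int
  assumes "squarefree K"
  shows "coprime (K div gcd v K) v"
proof -
  define g where "g = gcd v K"
  define d where "d = gcd (K div g) v"
  have K: "K = g * (K div g)" unfolding g_def by simp
  have "d dvd v" "d dvd K div g" unfolding d_def by auto
  then have "d dvd K"
    using K by (metis dvd_mult)
  with \<open>d dvd v\<close> have "d dvd g"
    unfolding g_def by simp
  with \<open>d dvd K div g\<close> have "d^2 dvd K"
    using K by (metis mult_dvd_mono power2_eq_square)
  then have "is_unit d" using assms squarefreeD by blast
  then show ?thesis unfolding d_def g_def by (simp add: coprime_iff_gcd_eq_1 is_unit_gcd)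
qed

lemma normalizer_Gamma0_maps_Rats_to_zero:
  fixes h K :: int and N :: nat
  assumes N: "int N = h^2 * K" and h: "h > 0" and K: "K > 0"
    and units: "units_self_inverse_mod h" and sqf: "squarefree K" and x: "x \<in> \<rat>"
  shows "\<exists>M\<in>normalizer_Gamma0 N. lft_defined M x \<and> lft M x = 0"
proof -
  have "of_int h * x \<in> \<rat>" using x by simp
  then obtain u v where v: "v > 0" and "coprime u v" and hx: "of_int h * x = of_int u / of_int v"
    by (rule Rats_cases')
  define g where "g = gcd v K"
  define e where "e = K div g"
  define v' where "v' = v div g"
  have K_eq: "K = e*g" unfolding e_def g_def by simp
  have v_eq: "v = g*v'" unfolding v'_def g_def by simp
  have "g > 0" unfolding g_def using K by simp
  with K_eq K have e: "e > 0" by (simp add: zero_less_mult_iff)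
  have "coprime (e*u) v"
    using squarefree_coprime_div_gcd[OF sqf] \<open>coprime u v\<close> unfolding e_def g_def by simp
  then obtain s t where st: "s*(e*u) + t*v = 1"
    by (rule coprime_bezout_int)
  have N': "int N = h^2*e*g" using N K_eq by simp
  \<comment> \<open>\<open>W\<close> sends \<open>x\<close> to \<open>\<infinity>\<close> and the Fricke involution \<open>F\<close> sends \<open>\<infinity>\<close> to \<open>0\<close>.\<close>
  define W :: mat2 where "W = (of_int (h*e*(-s)), of_int (-t), of_int (int N*v'), of_int (h*e*(-u)))"
  have "e*(-s)*(-u) - g*(-t)*v' = 1" using st v_eq by (simp add: algebra_simps)
  from atkin_lehner_in_normalizer_Gamma0[OF N' h e this units]
  have W: "W \<in> normalizer_Gamma0 N" unfolding W_def .
  define F :: mat2 where "F = (0, -1, real N, 0)"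
  have "(of_int (h*K*0), of_int (-1), of_int (int N*1), of_int (h*K*0)) \<in> normalizer_Gamma0 N"
    by (rule atkin_lehner_in_normalizer_Gamma0) (use N h K units in simp_all)
  then have F: "F \<in> normalizer_Gamma0 N" unfolding F_def by simp
  obtain A B C D where W_eq: "W = (A,B,C,D)" by (cases W)
  have "A*D - B*C > 0" using W unfolding normalizer_Gamma0_def W_eq by simp
  have "C*x + D = of_int h * of_int e * (of_int h * x * of_int v - of_int u)"
    using W_eq unfolding W_def N' v_eq by (simp add: algebra_simps power2_eq_square)
  then have CD: "C*x + D = 0" using hx v by simp
  have AB: "A*x + B \<noteq> 0"
  proof
    assume "A*x + B = 0"
    with CD have "B = -A*x" "D = -C*x" by auto
    then show False using \<open>A*D - B*C > 0\<close> by (simp add: algebra_simps)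
  qed
  have "int N > 0" using h K by (simp add: N)
  with AB have "real N * (A*x + B) \<noteq> 0" by simp
  then have "lft_defined (mmul2 F W) x \<and> lft (mmul2 F W) x = 0"
    using AB CD unfolding F_def W_eq by (simp add: algebra_simps)
  then show ?thesis using mmul2_in_normalizer_Gamma0[OF F W] by blast
qed

lemma normalizer_Gamma0_transitive_on_Rats:
  assumes "\<And>x. x \<in> \<rat> \<Longrightarrow> \<exists>M\<in>normalizer_Gamma0 N. lft_defined M x \<and> lft M x = 0"
  shows "\<forall>x\<in>\<rat>. \<forall>y\<in>\<rat>. \<exists>M\<in>normalizer_Gamma0 N. lft_defined M x \<and> lft M x = y"
proof (intro ballI)
  fix x y :: real assume "x \<in> \<rat>" "y \<in> \<rat>"
  then obtain P Q where P: "P \<in> normalizer_Gamma0 N" "lft_defined P x" "lft P x = 0"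
    and Q: "Q \<in> normalizer_Gamma0 N" "lft_defined Q y" "lft Q y = 0"
    using assms by meson
  have "det2 Q \<noteq> 0" using Q(1) unfolding normalizer_Gamma0_def by auto
  with Q have "lft_defined (minv2 Q) 0 \<and> lft (minv2 Q) 0 = y"
    using lft_minv2 by fastforce
  with P have "lft_defined (mmul2 (minv2 Q) P) x \<and> lft (mmul2 (minv2 Q) P) x = y"
    using lft_mmul2[of P x "minv2 Q"] by simp
  moreover have "mmul2 (minv2 Q) P \<in> normalizer_Gamma0 N"
    using P Q by (simp add: mmul2_in_normalizer_Gamma0 minv2_in_normalizer_Gamma0)
  ultimately show "\<exists>M\<in>normalizer_Gamma0 N. lft_defined M x \<and> lft M x = y" by blast
qed

lemma dvd_square_minus_one_iff_mod: "(m::int) dvd x^2 - 1 \<longleftrightarrow> m dvd (x mod m)^2 - 1"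
proof -
  have "(x^2 - 1) mod m = ((x mod m)^2 - 1) mod m"
    by (metis mod_diff_left_eq power_mod)
  then show ?thesis by (simp add: dvd_eq_mod_eq_0)
qed

lemma eight_dvd_odd_square_minus_one: "odd (x::int) \<Longrightarrow> 8 dvd x^2 - 1"
proof -
  assume "odd x"
  then have "x mod 8 = 1 \<or> x mod 8 = 3 \<or> x mod 8 = 5 \<or> x mod 8 = 7" by presburger
  then show ?thesis by (subst dvd_square_minus_one_iff_mod) (elim disjE; simp)
qed

lemma three_dvd_square_minus_one: "\<not> 3 dvd (x::int) \<Longrightarrow> 3 dvd x^2 - 1"
proof -
  assume "\<not> 3 dvd x"
  then have "x mod 3 = 1 \<or> x mod 3 = 2" by presburger
  then show ?thesis by (subst dvd_square_minus_one_iff_mod) (elim disjE; simp)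
qed

lemma units_self_inverse_modI:
  assumes "\<And>x. coprime x m \<Longrightarrow> m dvd x^2 - 1"
  shows "units_self_inverse_mod m"
  unfolding units_self_inverse_mod_def
proof (intro allI impI)
  fix x w :: int assume "m dvd x*w - 1"
  have "coprime x m"
  proof (rule coprimeI)
    fix d assume "d dvd x" "d dvd m"
    then have "d dvd x*w" "d dvd x*w - 1"
      using \<open>m dvd x*w - 1\<close> by (auto intro: dvd_trans)
    then have "d dvd x*w - (x*w - 1)" by (rule dvd_diff)
    then show "is_unit d" by simp
  qed
  have "m dvd (x^2 - 1) - (x*w - 1)"
    using assms[OF \<open>coprime x m\<close>] \<open>m dvd x*w - 1\<close> by (rule dvd_diff)
  also have "(x^2 - 1) - (x*w - 1) = x*(x - w)"
    by (simp add: algebra_simps power2_eq_square)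
  finally have "m dvd x*(x - w)" .
  with \<open>coprime x m\<close> show "m dvd x - w"
    by (simp add: coprime_commute coprime_dvd_mult_right_iff)
qed

lemma units_self_inverse_mod_mult:
  "units_self_inverse_mod m \<Longrightarrow> units_self_inverse_mod n \<Longrightarrow> coprime m n
   \<Longrightarrow> units_self_inverse_mod (m*n)"
  unfolding units_self_inverse_mod_def by (meson divides_mult dvd_mult_left dvd_mult_right)

lemma units_self_inverse_mod_power_2: "i \<le> 3 \<Longrightarrow> units_self_inverse_mod (2^i)"
proof (rule units_self_inverse_modI)
  fix x :: int assume "i \<le> 3" "coprime x (2^i)"
  show "2^i dvd x^2 - 1"
  proof (cases "i = 0")
    case False
    with \<open>coprime x (2^i)\<close> have "odd x" by simp
    then have "8 dvd x^2 - 1" by (rule eight_dvd_odd_square_minus_one)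
    then have "2^3 dvd x^2 - 1" by simp
    with \<open>i \<le> 3\<close> show ?thesis by (metis le_imp_power_dvd dvd_trans)
  qed simp
qed

lemma units_self_inverse_mod_power_3: "j \<le> 1 \<Longrightarrow> units_self_inverse_mod (3^j)"
proof (rule units_self_inverse_modI)
  fix x :: int assume "j \<le> 1" "coprime x (3^j)"
  show "3^j dvd x^2 - 1"
  proof (cases "j = 0")
    case False
    with \<open>j \<le> 1\<close> \<open>coprime x (3^j)\<close> have "j = 1" "\<not> 3 dvd x"
      by (auto simp: prime_imp_coprime dest: coprime_common_divisor)
    then show ?thesis using three_dvd_square_minus_one by simp
  qed simp
qed

lemma squarefree_int_of_nat: "squarefree n \<Longrightarrow> squarefree (int n)"
proof (rule squarefreeI)
  fix x :: int assume "squarefree n" "x^2 dvd int n"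
  then have "int (nat \<bar>x\<bar> ^ 2) dvd int n"
    by (simp add: power2_eq_square abs_mult[symmetric])
  then have "nat \<bar>x\<bar> ^ 2 dvd n"
    by (simp only: of_nat_dvd_iff)
  then have "nat \<bar>x\<bar> dvd 1"
    using \<open>squarefree n\<close> squarefreeD by blast
  then show "x dvd 1" by simp
qed

lemma squarefree_prime_power_le_1: "prime (p::nat) \<Longrightarrow> k \<le> 1 \<Longrightarrow> squarefree (p^k)"
  by (cases k) (auto simp: squarefree_prime)

lemma decomposition_square_times_squarefree:
  fixes a b N' :: nat
  assumes "a < 8" "b < 4" "squarefree N'" "\<not> 2 dvd N'" "\<not> 3 dvd N'"
  shows "\<exists>h K :: int. int (2^a * 3^b * N') = h^2 * K \<and> h > 0 \<and> K > 0
           \<and> units_self_inverse_mod h \<and> squarefree K"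
proof (intro exI conjI)
  define h :: int where "h = 2^(a div 2) * 3^(b div 2)"
  define K :: nat where "K = 2^(a mod 2) * 3^(b mod 2) * N'"
  have split: "(k::nat)^n = (k^(n div 2))^2 * k^(n mod 2)" for k n
    by (metis div_mult_mod_eq power_add power_mult mult.commute)
  from split[of 2 a] split[of 3 b] show "int (2^a * 3^b * N') = h^2 * int K"
    unfolding h_def K_def by (simp add: power_mult_distrib algebra_simps)
  show "h > 0" unfolding h_def by simp
  show "units_self_inverse_mod h"
    unfolding h_def using assms
    by (intro units_self_inverse_mod_mult units_self_inverse_mod_power_2 units_self_inverse_mod_power_3) auto
  have "coprime 2 N'" "coprime 3 N'"
    using assms(4,5) by (simp_all add: prime_imp_coprime)
  then have "coprime (2^(a mod 2) * 3^(b mod 2)) N'"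
    by simp
  moreover have "squarefree (2^(a mod 2) * 3^(b mod 2) :: nat)"
    by (rule squarefree_mult_coprime) (auto intro: squarefree_prime_power_le_1)
  ultimately show "squarefree (int K)"
    unfolding K_def using assms(3) by (intro squarefree_int_of_nat squarefree_mult_coprime[of _ N'])
  have "N' \<noteq> 0" using assms(3) by (metis not_squarefree_0)
  then show "int K > 0" unfolding K_def by simp
qed

section \<open>Necessity\<close>

lemma Gamma0_off_diagonal_Ints:
  assumes "g \<in> Gamma0 N"
  shows "upper_right2 g \<in> \<int>" "lower_left2 g / real N \<in> \<int>"
proof -
  obtain x y z w :: int where "g = (of_int x, of_int y, of_int (int N * z), of_int w)"
    using assms by (rule Gamma0E)
  then show "upper_right2 g \<in> \<int>" "lower_left2 g / real N \<in> \<int>"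
    by (cases "N = 0"; simp)+
qed

lemma normalizer_Gamma0_diagonal_congruence:
  fixes m x y z w :: int and N :: nat
  assumes M: "M \<in> normalizer_Gamma0 N" and "lft_defined M 0" "lft M 0 = 1 / of_int m"
    and "m > 0" "N > 0" "m^2 dvd int N"
    and G: "(of_int x, of_int y, of_int (int N * z), of_int w) \<in> Gamma0 N" (is "?G \<in> _")
  shows "m dvd x - w"
proof -
  obtain A B C D where M_eq: "M = (A,B,C,D)" by (cases M)
  define \<Delta> where "\<Delta> = A*D - B*C"
  define q where "q = x - w"
  have "\<Delta> > 0" using M unfolding normalizer_Gamma0_def M_eq \<Delta>_def by simp
  have D: "D = of_int m * B" using assms(2-4) unfolding M_eq by (simp add: field_simps)
  have conj_Gamma0: "conj2 M g \<in> Gamma0 N" if "g \<in> Gamma0 N" for g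
    using M that unfolding normalizer_Gamma0_conj2 by blast
  define T :: mat2 where "T = (1,1,0,1)"
  define L :: mat2 where "L = (1,0,real N,1)"
  have "T \<in> Gamma0 N" "L \<in> Gamma0 N"
    using Gamma0_of_intI[where a=1 and b=1 and c=0 and d=1 and N=N]
      Gamma0_of_intI[where a=1 and b=0 and c="int N" and d=1 and N=N]
    unfolding T_def L_def by simp_all
  then have ur: "upper_right2 (conj2 M g) \<in> \<int>" and ll: "lower_left2 (conj2 M g) / real N \<in> \<int>"
    if "g \<in> {T, L, ?G}" for g
    using that G conj_Gamma0 Gamma0_off_diagonal_Ints by blast+
  \<comment> \<open>\<open>?G\<close> is a combination of \<open>T\<close>, \<open>L\<close>, the identity and \<open>diag(1,0)\<close>, whose conjugate has
    off-diagonal entries \<open>-AB/\<Delta>\<close> and \<open>CD/\<Delta>\<close>.\<close>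
  have "of_int q * (A*B) / \<Delta> = of_int y * upper_right2 (conj2 M T)
          + of_int z * upper_right2 (conj2 M L) - upper_right2 (conj2 M ?G)"
    using \<open>\<Delta> > 0\<close> unfolding M_eq T_def L_def conj2_off_diagonal \<Delta>_def[symmetric] q_def
    by (simp add: field_simps power2_eq_square)
  also have "\<dots> \<in> \<int>" using ur by (intro Ints_diff Ints_add Ints_mult) auto
  finally obtain u where u: "of_int q * (A*B) / \<Delta> = of_int u" by (auto elim: Ints_cases)
  have "of_int q * (C*D) / (\<Delta> * real N) = lower_left2 (conj2 M ?G) / real N
          - of_int y * (lower_left2 (conj2 M T) / real N) - of_int z * (lower_left2 (conj2 M L) / real N)"
    using \<open>\<Delta> > 0\<close> \<open>N > 0\<close> unfolding M_eq T_def L_def conj2_off_diagonal \<Delta>_def[symmetric] q_def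
    by (simp add: field_simps power2_eq_square)
  also have "\<dots> \<in> \<int>" using ll by (intro Ints_diff Ints_add Ints_mult) auto
  finally obtain v where v: "of_int q * (C*D) / (\<Delta> * real N) = of_int v" by (auto elim: Ints_cases)
  have qAB: "of_int q * (A*B) = \<Delta> * of_int u" and qCD: "of_int q * (C*D) = \<Delta> * (real N * of_int v)"
    using u v \<open>\<Delta> > 0\<close> \<open>N > 0\<close> by (simp_all add: field_simps)
  have CD: "C*D = of_int m^2 * (A*B) - of_int m * \<Delta>"
    unfolding \<Delta>_def D by (simp add: algebra_simps power2_eq_square)
  have "\<Delta> * (real N * of_int v) = of_int m^2 * (of_int q * (A*B)) - of_int m * of_int q * \<Delta>"
    by (simp only: qCD[symmetric] CD) (simp add: algebra_simps)
  also have "\<dots> = \<Delta> * (of_int m^2 * of_int u - of_int m * of_int q)"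
    unfolding qAB by (simp add: algebra_simps)
  finally have "\<Delta> * (real N * of_int v) = \<Delta> * (of_int m^2 * of_int u - of_int m * of_int q)" .
  then have "of_int (q*m) = (of_int (m^2 * u - int N * v) :: real)"
    using \<open>\<Delta> > 0\<close> by simp
  then have "q*m = m^2 * u - int N * v" by (simp only: of_int_eq_iff)
  with \<open>m^2 dvd int N\<close> have "m^2 dvd q*m" by simp
  with \<open>m > 0\<close> show ?thesis unfolding q_def by (simp add: power2_eq_square)
qed

lemma exists_coprime_congruent_mod_prime_power:
  fixes p y :: int and N k :: nat
  assumes p: "prime p" and "\<not> p dvd y" "N > 0" "k > 0"
  shows "\<exists>x. coprime x (int N) \<and> p^k dvd x - y"
proof -
  have "int N \<noteq> 0" "\<not> is_unit p" using \<open>N > 0\<close> p not_prime_unit by auto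
  then obtain N1 where N1: "int N = p ^ multiplicity p (int N) * N1" "\<not> p dvd N1"
    by (rule multiplicity_decompose')
  have "coprime (p^k) N1" using prime_imp_coprime[OF p N1(2)] by simp
  then obtain s' s where st: "s'*p^k + s*N1 = 1"
    by (rule coprime_bezout_int)
  \<comment> \<open>By the Chinese remainder theorem: \<open>x \<equiv> y\<close> modulo \<open>p^k\<close> and \<open>x \<equiv> 1\<close> modulo \<open>N1\<close>.\<close>
  define x where "x = ((y - 1)*s)*N1 + 1"
  have "x - y = (1 - y)*(1 - s*N1)"
    unfolding x_def by (simp add: algebra_simps)
  also have "1 - s*N1 = s'*p^k"
    using st by linarith
  finally have cong: "p^k dvd x - y" by simp
  have "gcd N1 x = 1"
    unfolding x_def gcd_add_mult by simp
  then have "coprime x N1"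
    by (simp add: coprime_iff_gcd_eq_1 gcd.commute)
  moreover have "\<not> p dvd x"
  proof
    assume "p dvd x"
    moreover have "p dvd x - y"
      using cong \<open>k > 0\<close> by (meson dvd_power dvd_trans)
    ultimately have "p dvd x - (x - y)" by (rule dvd_diff)
    with \<open>\<not> p dvd y\<close> show False by simp
  qed
  then have "coprime x (p ^ multiplicity p (int N))"
    using p by (simp add: prime_imp_coprime coprime_commute)
  ultimately have "coprime x (int N)"
    by (subst N1(1)) simp
  with cong show ?thesis by blast
qed

lemma transitive_on_Rats_imp_square_congruence:
  fixes p y :: int and N k :: nat
  assumes T: "\<forall>x\<in>\<rat>. \<forall>y\<in>\<rat>. \<exists>M\<in>normalizer_Gamma0 N. lft_defined M x \<and> lft M x = y"
    and "N > 0" "prime p" "k > 0" and sq: "(p^k)^2 dvd int N" and "\<not> p dvd y"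
  shows "p^k dvd y^2 - 1"
proof -
  define m where "m = p^k"
  obtain x where "coprime x (int N)" and xy: "m dvd x - y"
    using exists_coprime_congruent_mod_prime_power assms(2-4,6) unfolding m_def by blast
  from \<open>coprime x (int N)\<close> obtain w t where wt: "w*x + t*int N = 1"
    by (rule coprime_bezout_int)
  then have "(of_int x, of_int (-t), of_int (int N * 1), of_int w) \<in> Gamma0 N"
    by (intro Gamma0_of_intI) (simp_all add: algebra_simps)
  moreover have "(0::real) \<in> \<rat>" "1 / of_int m \<in> (\<rat>::real set)" by simp_all
  then obtain M where "M \<in> normalizer_Gamma0 N" "lft_defined M 0" "lft M 0 = 1 / of_int m"
    using T by blast
  moreover have "m > 0" unfolding m_def using \<open>prime p\<close> by (simp add: prime_gt_0_int)
  ultimately have "m dvd x - w"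
    using normalizer_Gamma0_diagonal_congruence \<open>N > 0\<close> sq unfolding m_def by blast
  moreover have "m dvd int N"
    using dvd_trans[OF _ sq] unfolding m_def by (simp add: power2_eq_square)
  moreover have "y^2 - 1 = x*(x - w) - t*int N - (x - y)*(x + y)"
    using wt by (simp add: algebra_simps power2_eq_square)
  ultimately show ?thesis
    using xy unfolding m_def by simp
qed

lemma decomposition_of_bounded_square_factors:
  fixes N :: nat
  assumes "N > 0" "\<not> 2^8 dvd N" "\<not> 3^4 dvd N" and large: "\<And>p. prime p \<Longrightarrow> p \<ge> 5 \<Longrightarrow> \<not> p^2 dvd N"
  shows "\<exists>a b N'::nat. a < 8 \<and> b < 4 \<and> squarefree N' \<and> \<not> 2 dvd N' \<and> \<not> 3 dvd N'
                  \<and> N = 2^a * 3^b * N'"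
proof -
  have "N \<noteq> 0" "\<not> is_unit (2::nat)" using \<open>N > 0\<close> by simp_all
  then obtain N2 where N2: "N = 2 ^ multiplicity 2 N * N2" "\<not> 2 dvd N2"
    by (rule multiplicity_decompose')
  have "N2 \<noteq> 0" using N2(2) by (metis dvd_0_right)
  moreover have "\<not> is_unit (3::nat)" by simp
  ultimately obtain N' where N': "N2 = 3 ^ multiplicity 3 N2 * N'" "\<not> 3 dvd N'"
    by (rule multiplicity_decompose')
  define a where "a = multiplicity 2 N"
  define b where "b = multiplicity 3 N2"
  have N_eq: "N = 2^a * 3^b * N'" using N2 N' unfolding a_def b_def by (simp add: mult.assoc)
  have "\<not> 2 dvd N'" using N2(2) N'(1) by (metis dvd_mult)
  have "a < 8"
  proof (rule ccontr)
    assume "\<not> a < 8"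
    then have "(2::nat)^8 dvd 2^a" by (intro le_imp_power_dvd) simp
    then show False using assms(2) N_eq by (metis dvd_mult2 mult.assoc)
  qed
  moreover have "b < 4"
  proof (rule ccontr)
    assume "\<not> b < 4"
    then have "(3::nat)^4 dvd 3^b" by (intro le_imp_power_dvd) simp
    then show False using assms(3) N_eq by (metis dvd_mult dvd_mult2 mult.commute)
  qed
  moreover have "squarefree N'"
  proof (rule squarefreeI)
    fix x :: nat assume "x^2 dvd N'"
    show "x dvd 1"
    proof (rule ccontr)
      assume "\<not> x dvd 1"
      then obtain p where "prime p" "p dvd x" using prime_factor_nat by auto
      then have "p^2 dvd N'" using \<open>x^2 dvd N'\<close> by (meson dvd_power_same dvd_trans)
      then have "p dvd N'" "p^2 dvd N"
        using N_eq by (auto simp: power2_eq_square intro: dvd_mult_left)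
      then have "odd p" "p \<noteq> 3"
        using \<open>\<not> 2 dvd N'\<close> \<open>\<not> 3 dvd N'\<close> by (auto intro: dvd_trans)
      with prime_ge_2_nat[OF \<open>prime p\<close>] have "p \<ge> 5" by presburger
      with \<open>prime p\<close> \<open>p^2 dvd N\<close> show False using large by blast
    qed
  qed
  ultimately show ?thesis using \<open>\<not> 2 dvd N'\<close> N'(2) N_eq by blast
qed

lemma transitive_on_Rats_imp_bounded_square_factors:
  fixes N :: nat
  assumes T: "\<forall>x\<in>\<rat>. \<forall>y\<in>\<rat>. \<exists>M\<in>normalizer_Gamma0 N. lft_defined M x \<and> lft M x = y"
    and "N > 0"
  shows "\<not> 2^8 dvd N" "\<not> 3^4 dvd N" "\<And>p. prime p \<Longrightarrow> p \<ge> 5 \<Longrightarrow> \<not> p^2 dvd N"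
proof -
  have sq: "\<not> (p^k)^2 dvd int N" if "prime p" "k > 0" "\<not> p dvd y" "\<not> p^k dvd y^2 - 1"
    for p y :: int and k
    using transitive_on_Rats_imp_square_congruence[OF T \<open>N > 0\<close>] that by auto
  show "\<not> 2^8 dvd N"
    using sq[of 2 4 3] by simp (metis of_nat_dvd_iff of_nat_numeral)
  show "\<not> 3^4 dvd N"
    using sq[of 3 2 2] by simp (metis of_nat_dvd_iff of_nat_numeral)
  show "\<not> p^2 dvd N" if "prime p" "p \<ge> 5" for p
  proof
    assume "p^2 dvd N"
    then have "(int p ^ 1)^2 dvd int N"
      by (metis of_nat_dvd_iff of_nat_power power_one_right)
    moreover have "\<not> int p dvd 2" "\<not> int p dvd 3"
      using \<open>p \<ge> 5\<close> by (auto dest: zdvd_imp_le)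
    ultimately show False
      using sq[of "int p" 1 2] \<open>prime p\<close> by simp
  qed
qed

theorem proposition1:
  fixes N :: nat
  assumes "N \<ge> 1"
  shows "(\<forall>x\<in>(\<rat>::real set). \<forall>y\<in>(\<rat>::real set).
            \<exists>M\<in>normalizer_Gamma0 N. lft_defined M x \<and> lft M x = y)
         \<longleftrightarrow> (\<exists>a b N'::nat. a < 8 \<and> b < 4 \<and> squarefree N' \<and> \<not> 2 dvd N' \<and> \<not> 3 dvd N'
                  \<and> N = 2^a * 3^b * N')"
proof
  assume "\<forall>x\<in>(\<rat>::real set). \<forall>y\<in>(\<rat>::real set).
            \<exists>M\<in>normalizer_Gamma0 N. lft_defined M x \<and> lft M x = y"
  moreover have "N > 0" using assms by simp
  ultimately show "\<exists>a b N'::nat. a < 8 \<and> b < 4 \<and> squarefree N' \<and> \<not> 2 dvd N' \<and> \<not> 3 dvd N'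
                  \<and> N = 2^a * 3^b * N'"
    by (intro decomposition_of_bounded_square_factors transitive_on_Rats_imp_bounded_square_factors)
next
  assume "\<exists>a b N'::nat. a < 8 \<and> b < 4 \<and> squarefree N' \<and> \<not> 2 dvd N' \<and> \<not> 3 dvd N'
                  \<and> N = 2^a * 3^b * N'"
  then obtain h K :: int where "int N = h^2 * K" "h > 0" "K > 0" "units_self_inverse_mod h" "squarefree K"
    using decomposition_square_times_squarefree by blast
  then show "\<forall>x\<in>(\<rat>::real set). \<forall>y\<in>(\<rat>::real set).
            \<exists>M\<in>normalizer_Gamma0 N. lft_defined M x \<and> lft M x = y"
    by (intro normalizer_Gamma0_transitive_on_Rats normalizer_Gamma0_maps_Rats_to_zero)
qed

end
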